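(* Let $n\ge1$, $k\ge 1$, and let $s_1,\dots,s_k$ be nonnegative integers with $S:=\sum_{i=1}^k s_i\ge 1$. There are $k$ players who independently each open one cereal box per time step; each box contains one of $n$ coupon types chosen uniformly at random, independently of everything else. Player $i$ is currently missing $s_i$ of the $n$ coupon types, and $X_i(s_i)$ is the number of boxes player $i$ must open until they have all $n$ types. Let $P_1(s_1,\dots,s_k)$ be the probability that the first player is the slowest to complete the collection, i.e. that $X_1(s_1)=\max\{X_1(s_1),\dots,X_k(s_k)\}$. Then $$P_1(s_1,\dots,s_k)=\frac{s_1}{\sum_{i=1}^k s_i}+o(1).$$
   Context: The term $o(1)$ denotes a quantity tending to $0$ as $n\to\infty$ with $k$ and $s_1,\dots,s_k$ fixed. *)

theory Defs
  imports "HOL-Probability.Probability"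
begin

definition step_pmf :: "nat \<Rightarrow> nat \<Rightarrow> (nat \<Rightarrow> nat) pmf" where
  "step_pmf n k = Pi_pmf {..<k} 0 (\<lambda>_. pmf_of_set {..<n})"

definition coupon_space :: "nat \<Rightarrow> nat \<Rightarrow> (nat \<Rightarrow> nat) stream measure" where
  "coupon_space n k = stream_space (measure_pmf (step_pmf n k))"

text \<open>Number of boxes player i must open until all types are collected, when the
  player is missing the s types {0..<s} (by symmetry WLOG these).\<close>
definition completion_time :: "nat \<Rightarrow> nat \<Rightarrow> (nat \<Rightarrow> nat) stream \<Rightarrow> nat" where
  "completion_time s i \<omega> = (LEAST t. {..<s} \<subseteq> {(\<omega> !! j) i | j. j < t})"

text \<open>Probability that player 0 (the ``first player'') is the slowest (ties included).\<close>
definition P1 :: "nat \<Rightarrow> nat \<Rightarrow> (nat \<Rightarrow> nat) \<Rightarrow> real" where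
  "P1 n k s = measure (coupon_space n k)
     {\<omega> \<in> space (coupon_space n k). \<forall>i<k. completion_time (s i) i \<omega> \<le> completion_time (s 0) 0 \<omega>}"

end

theory Submission
  imports Defs
begin

text \<open>
  Let \<open>A i\<close> be the set of coupons still missing to player \<open>i\<close> and \<open>U = \<Sum>i. |A i|\<close>.
  Conditioning on the first box of every player, with probability \<open>1 - O(U/n)\<close> nobody
  makes progress, with probability \<open>1/n + O(U/n\<^sup>2)\<close> one prescribed missing coupon is found
  while nobody else progresses, and with probability \<open>O(U\<^sup>2/n\<^sup>2)\<close> something else happens.
  Up to these errors, the probability \<open>F(A)\<close> that player 0 is slowest is therefore the
  average of the \<open>F\<close>-values after removing a single uniformly chosen missing coupon.  The
  share \<open>|A 0| / U\<close> of player 0 is exactly harmonic for this averaging (player 0 is last iff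
  the last missing coupon overall is his), and induction on \<open>U\<close> gives
  \<open>|F(A) - |A 0| / U| \<le> 2 U\<^sup>3 / n\<close>.
\<close>

section \<open>An averaging inequality\<close>

lemma one_minus_sum_le_prod_one_minus:
  fixes a :: "'a \<Rightarrow> real"
  assumes "finite J" and "\<And>j. j \<in> J \<Longrightarrow> 0 \<le> a j \<and> a j \<le> 1"
  shows "1 - (\<Sum>j\<in>J. a j) \<le> (\<Prod>j\<in>J. 1 - a j)"
  using assms
proof (induction J rule: finite_induct)
  case (insert x J)
  have ax: "0 \<le> a x" "a x \<le> 1" and IH: "1 - (\<Sum>j\<in>J. a j) \<le> (\<Prod>j\<in>J. 1 - a j)"
    using insert by auto
  have "0 \<le> a x * (\<Sum>j\<in>J. a j)"
    using insert ax by (intro mult_nonneg_nonneg sum_nonneg) auto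
  then have "1 - (a x + (\<Sum>j\<in>J. a j)) \<le> (1 - a x) * (1 - (\<Sum>j\<in>J. a j))"
    by (simp add: algebra_simps)
  also have "\<dots> \<le> (1 - a x) * (\<Prod>j\<in>J. 1 - a j)"
    using IH ax by (intro mult_left_mono) auto
  finally show ?case using insert by simp
qed simp

lemma averaging_equation_identity:
  fixes w f g :: "'a \<Rightarrow> real"
  assumes "F = p * F + (\<Sum>j\<in>J. w j * f j) + r"
    and "(\<Sum>j\<in>J. g j) = real (card J) * G"
  shows "(F - G) * (1 - p) = (\<Sum>j\<in>J. w j * (f j - g j)) + (\<Sum>j\<in>J. (w j - c) * (g j - G))
    + (r - G * (1 - p - (\<Sum>j\<in>J. w j)))"
proof -
  have "(\<Sum>j\<in>J. (w j - c) * (g j - G))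
      = (\<Sum>j\<in>J. w j * g j) - G * (\<Sum>j\<in>J. w j) - c * ((\<Sum>j\<in>J. g j) - real (card J) * G)"
    by (simp add: algebra_simps sum.distrib sum_subtractf sum_distrib_left)
  then show ?thesis
    using assms by (simp add: algebra_simps sum_subtractf)
qed

lemma abs_sum_mult_le_card_mult:
  fixes a b :: "'a \<Rightarrow> real"
  assumes "\<And>j. j \<in> J \<Longrightarrow> \<bar>a j\<bar> \<le> \<delta>" and "\<And>j. j \<in> J \<Longrightarrow> \<bar>b j\<bar> \<le> 1"
  shows "\<bar>\<Sum>j\<in>J. a j * b j\<bar> \<le> real (card J) * \<delta>"
proof -
  have "\<bar>a j * b j\<bar> \<le> \<delta>" if "j \<in> J" for j
    using assms(1)[OF that] assms(2)[OF that]
    unfolding abs_mult by (metis abs_ge_zero mult_left_le order_trans)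
  then show ?thesis
    by (intro order.trans[OF sum_abs] sum_bounded_above)
qed

lemma leftover_mass_le:
  fixes J :: "'a set" and w :: "'a \<Rightarrow> real" and n p :: real
  defines "U \<equiv> real (card J)"
  assumes "1 - U / n \<le> p" and "\<And>j. j \<in> J \<Longrightarrow> 1 / n - U / n\<^sup>2 \<le> w j"
  shows "1 - p - (\<Sum>j\<in>J. w j) \<le> U\<^sup>2 / n\<^sup>2"
proof -
  have "U * (1 / n - U / n\<^sup>2) \<le> (\<Sum>j\<in>J. w j)"
    unfolding U_def by (rule sum_bounded_below) (use assms(3) in \<open>simp add: U_def\<close>)
  then have "1 - p - (\<Sum>j\<in>J. w j) \<le> U / n - U * (1 / n - U / n\<^sup>2)"
    using assms(2) by simp
  also have "\<dots> = U\<^sup>2 / n\<^sup>2"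
    by (simp add: power2_eq_square right_diff_distrib)
  finally show ?thesis .
qed

lemma averaging_equation_deviation:
  fixes J :: "'a set" and w f g :: "'a \<Rightarrow> real" and F G p r \<epsilon> n :: real
  defines "U \<equiv> real (card J)"
  assumes "finite J"
    and F_eq: "F = p * F + (\<Sum>j\<in>J. w j * f j) + r"
    and r: "0 \<le> r" "r \<le> 1 - p - (\<Sum>j\<in>J. w j)"
    and p: "1 - U / n \<le> p" "p \<le> 1 - 1 / n"
    and w: "\<And>j. j \<in> J \<Longrightarrow> 0 \<le> w j \<and> 1 / n - U / n\<^sup>2 \<le> w j \<and> w j \<le> 1 / n"
    and f: "\<And>j. j \<in> J \<Longrightarrow> \<bar>f j - g j\<bar> \<le> \<epsilon>"
    and g: "\<And>j. j \<in> J \<Longrightarrow> 0 \<le> g j \<and> g j \<le> 1" "0 \<le> G" "G \<le> 1"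
    and harmonic: "(\<Sum>j\<in>J. g j) = U * G"
    and "0 \<le> \<epsilon>" "0 < n"
  shows "\<bar>F - G\<bar> \<le> \<epsilon> + 2 * U\<^sup>2 / n"
proof -
  define D where "D = 1 - p"
  define W where "W = (\<Sum>j\<in>J. w j)"
  define q where "q = D - W"
  have D: "1 / n \<le> D" using p by (simp add: D_def)
  have "0 < D"
    using D \<open>0 < n\<close> by (meson divide_pos_pos order.strict_trans2 zero_less_one)
  have q: "r \<le> q" "q \<le> U\<^sup>2 / n\<^sup>2"
    using r leftover_mass_le[of J n p w] p(1) w by (simp_all add: q_def D_def W_def U_def)
  have "\<bar>\<Sum>j\<in>J. w j * (f j - g j)\<bar> \<le> (\<Sum>j\<in>J. w j * \<epsilon>)"
    using w f by (auto intro!: order.trans[OF sum_abs] sum_mono simp: abs_mult mult_left_mono)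
  also have "\<dots> = \<epsilon> * W"
    by (simp add: W_def sum_distrib_left mult.commute)
  also have "\<dots> \<le> \<epsilon> * D"
    using q r \<open>0 \<le> \<epsilon>\<close> by (simp add: q_def mult_left_mono)
  finally have b1: "\<bar>\<Sum>j\<in>J. w j * (f j - g j)\<bar> \<le> \<epsilon> * D" .
  have "\<bar>\<Sum>j\<in>J. (w j - 1 / n) * (g j - G)\<bar> \<le> U * (U / n\<^sup>2)"
    unfolding U_def using w g by (intro abs_sum_mult_le_card_mult) (fastforce simp: U_def)+
  then have b2: "\<bar>\<Sum>j\<in>J. (w j - 1 / n) * (g j - G)\<bar> \<le> U\<^sup>2 / n\<^sup>2"
    by (simp add: power2_eq_square)
  have "0 \<le> G * q" "G * q \<le> q"
    using q r g(2,3) by (simp_all add: mult_left_le_one_le)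
  then have b3: "\<bar>r - G * q\<bar> \<le> U\<^sup>2 / n\<^sup>2"
    using q r by linarith
  have "2 * U\<^sup>2 / n\<^sup>2 = 2 * U\<^sup>2 / n * (1 / n)"
    by (simp add: power2_eq_square)
  also have "\<dots> \<le> 2 * U\<^sup>2 / n * D"
    using D \<open>0 < n\<close> by (intro mult_left_mono) auto
  finally have "2 * U\<^sup>2 / n\<^sup>2 \<le> 2 * U\<^sup>2 / n * D" .
  have "(F - G) * D = (\<Sum>j\<in>J. w j * (f j - g j)) + (\<Sum>j\<in>J. (w j - 1 / n) * (g j - G)) + (r - G * q)"
    unfolding D_def q_def W_def by (rule averaging_equation_identity[OF F_eq harmonic[unfolded U_def]])
  then have "\<bar>F - G\<bar> * D \<le> \<epsilon> * D + U\<^sup>2 / n\<^sup>2 + U\<^sup>2 / n\<^sup>2"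
    using b1 b2 b3 \<open>0 < D\<close> by (simp add: abs_mult)
  also have "\<dots> \<le> (\<epsilon> + 2 * U\<^sup>2 / n) * D"
    using \<open>2 * U\<^sup>2 / n\<^sup>2 \<le> 2 * U\<^sup>2 / n * D\<close> by (simp add: algebra_simps)
  finally show ?thesis
    using \<open>0 < D\<close> by simp
qed

section \<open>The share of the first player\<close>

text \<open>When nothing is missing, all collection times vanish and player 0 counts as slowest.\<close>

definition share :: "nat \<Rightarrow> (nat \<Rightarrow> nat set) \<Rightarrow> real" where
  "share k A = (if (\<Sum>i<k. card (A i)) = 0 then 1
                else real (card (A 0)) / real (\<Sum>i<k. card (A i)))"

lemma share_bounds:
  assumes "0 < k" "\<forall>i<k. finite (A i)"
  shows "0 \<le> share k A \<and> share k A \<le> 1"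
proof -
  define U where "U = (\<Sum>i<k. card (A i))"
  have "card (A 0) \<le> U"
    unfolding U_def using assms by (intro member_le_sum) auto
  then show ?thesis by (simp add: share_def U_def[symmetric] divide_le_eq_1)
qed

lemma sum_card_remove:
  fixes A :: "nat \<Rightarrow> 'a set"
  assumes "i < k" "a \<in> A i" "finite (A i)"
  shows "(\<Sum>j<k. card ((A(i := A i - {a})) j)) + 1 = (\<Sum>j<k. card (A j))"
proof -
  have "(\<Sum>j<k. card ((A(i := A i - {a})) j))
      = card ((A(i := A i - {a})) i) + (\<Sum>j\<in>{..<k} - {i}. card ((A(i := A i - {a})) j))"
    using assms by (intro sum.remove) auto
  also have "\<dots> = card (A i - {a}) + (\<Sum>j\<in>{..<k} - {i}. card (A j))"
    by (intro arg_cong2[where f = "(+)"] sum.cong) auto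
  finally have "(\<Sum>j<k. card ((A(i := A i - {a})) j))
      = card (A i - {a}) + (\<Sum>j\<in>{..<k} - {i}. card (A j))" .
  moreover have "(\<Sum>j<k. card (A j)) = card (A i) + (\<Sum>j\<in>{..<k} - {i}. card (A j))"
    using assms by (simp add: sum.remove[of "{..<k}" i])
  moreover have "card (A i - {a}) + 1 = card (A i)"
    using card_Suc_Diff1[of "A i" a] assms by simp
  ultimately show ?thesis by simp
qed

lemma share_harmonic:
  assumes "0 < k" "\<forall>i<k. finite (A i)" "A 0 \<noteq> {}"
  shows "(\<Sum>(i, a)\<in>Sigma {..<k} A. share k (A(i := A i - {a})))
    = real (\<Sum>i<k. card (A i)) * share k A"
proof -
  define U where "U = (\<Sum>i<k. card (A i))"
  define c0 where "c0 = card (A 0)"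
  have "1 \<le> c0" using assms by (simp add: c0_def Suc_le_eq card_gt_0_iff)
  moreover have "c0 \<le> U"
    unfolding c0_def U_def using assms by (intro member_le_sum) auto
  ultimately obtain m where m: "U = Suc m" by (cases U) auto
  have "share k (A(i := A i - {a})) = (if m = 0 then 1 else (real c0 - (if i = 0 then 1 else 0)) / m)"
    if "i < k" "a \<in> A i" for i a
  proof -
    have "(\<Sum>j<k. card ((A(i := A i - {a})) j)) = m"
      using sum_card_remove[of i k a A] assms that m by (simp add: U_def)
    moreover have "real (card ((A(i := A i - {a})) 0)) = real c0 - (if i = 0 then 1 else 0)"
      using assms that \<open>1 \<le> c0\<close> by (cases "i = 0") (simp_all add: c0_def card_Diff_singleton of_nat_diff)
    ultimately show ?thesis by (simp add: share_def)
  qed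
  then have "(\<Sum>(i, a)\<in>Sigma {..<k} A. share k (A(i := A i - {a})))
      = (\<Sum>i<k. real (card (A i)) * (if m = 0 then 1 else (real c0 - (if i = 0 then 1 else 0)) / m))"
    using assms by (simp add: sum.Sigma[symmetric])
  also have "\<dots> = real U * share k A"
  proof (cases "m = 0")
    case True
    then show ?thesis using \<open>1 \<le> c0\<close> \<open>c0 \<le> U\<close> m by (simp add: share_def U_def c0_def flip: of_nat_sum)
  next
    case False
    have "(\<Sum>i<k. real (card (A i)) * ((real c0 - (if i = 0 then 1 else 0)) / m))
        = (real U * c0 - c0) / m"
      using assms by (simp add: U_def c0_def sum_divide_distrib[symmetric] right_diff_distrib
          sum_subtractf sum_distrib_right[symmetric] if_distrib[of "(*) _"] cong: if_cong)
    then show ?thesis using False m by (simp add: share_def U_def[symmetric] c0_def[symmetric] field_simps)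
  qed
  finally show ?thesis by (simp add: U_def)
qed

section \<open>One step of the process\<close>

definition stay_prob :: "nat \<Rightarrow> nat \<Rightarrow> (nat \<Rightarrow> nat set) \<Rightarrow> real" where
  "stay_prob n k A = (\<Prod>j<k. 1 - real (card (A j)) / real n)"

definition move_prob :: "nat \<Rightarrow> nat \<Rightarrow> (nat \<Rightarrow> nat set) \<Rightarrow> nat \<Rightarrow> real" where
  "move_prob n k A i = (\<Prod>j\<in>{..<k} - {i}. 1 - real (card (A j)) / real n) / real n"

lemma stay_prob_lower:
  assumes "\<forall>j<k. card (A j) \<le> n"
  shows "1 - real (\<Sum>j<k. card (A j)) / real n \<le> stay_prob n k A"
proof -
  have "1 - (\<Sum>j<k. real (card (A j)) / real n) \<le> stay_prob n k A"
    unfolding stay_prob_def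
    by (rule one_minus_sum_le_prod_one_minus) (use assms in \<open>auto simp: divide_le_eq_1\<close>)
  then show ?thesis by (simp add: sum_divide_distrib)
qed

lemma stay_prob_upper:
  assumes "\<forall>j<k. card (A j) \<le> n" "i < k" "A i \<noteq> {}" "finite (A i)"
  shows "stay_prob n k A \<le> 1 - 1 / real n"
proof -
  have rest: "0 \<le> (\<Prod>j\<in>{..<k} - {i}. 1 - real (card (A j)) / real n)"
             "(\<Prod>j\<in>{..<k} - {i}. 1 - real (card (A j)) / real n) \<le> 1"
    using assms(1) by (auto intro!: prod_nonneg prod_le_1 simp: divide_le_eq_1)
  have "1 \<le> card (A i)" "card (A i) \<le> n"
    using assms by (auto simp: Suc_le_eq card_gt_0_iff)
  then have "0 \<le> 1 - real (card (A i)) / real n" "1 - real (card (A i)) / real n \<le> 1 - 1 / real n"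
    by (auto simp: divide_le_eq_1 divide_right_mono)
  then have "(1 - real (card (A i)) / real n) * (\<Prod>j\<in>{..<k} - {i}. 1 - real (card (A j)) / real n)
      \<le> 1 - 1 / real n"
    using rest by (meson mult_left_le order_trans)
  then show ?thesis
    using assms(2) by (simp add: stay_prob_def prod.remove)
qed

lemma move_prob_bounds:
  assumes "\<forall>j<k. card (A j) \<le> n" "n \<ge> 1"
  defines "U \<equiv> real (\<Sum>j<k. card (A j))"
  shows "0 \<le> move_prob n k A i \<and> 1 / n - U / n\<^sup>2 \<le> move_prob n k A i \<and> move_prob n k A i \<le> 1 / n"
proof -
  define P where "P = (\<Prod>j\<in>{..<k} - {i}. 1 - real (card (A j)) / real n)"
  have P: "0 \<le> P" "P \<le> 1"
    using assms(1) by (auto intro!: prod_nonneg prod_le_1 simp: P_def divide_le_eq_1)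
  have "1 - (\<Sum>j\<in>{..<k} - {i}. real (card (A j)) / real n) \<le> P"
    unfolding P_def using assms(1) by (intro one_minus_sum_le_prod_one_minus) (auto simp: divide_le_eq_1)
  moreover have "(\<Sum>j\<in>{..<k} - {i}. real (card (A j))) \<le> U"
    unfolding U_def by (simp add: sum_mono2)
  then have "(\<Sum>j\<in>{..<k} - {i}. real (card (A j)) / real n) \<le> U / n"
    by (simp add: sum_divide_distrib[symmetric] divide_right_mono)
  ultimately have "(1 - U / n) / n \<le> P / n"
    by (intro divide_right_mono) auto
  moreover have "(1 - U / n) / n = 1 / n - U / n\<^sup>2"
    using assms(2) by (simp add: field_simps power2_eq_square)
  ultimately show ?thesis
    using P by (simp add: move_prob_def P_def[symmetric] divide_right_mono)
qed

lemma measure_step_pmf: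
  assumes "n \<ge> 1"
  shows "measure_pmf.prob (step_pmf n k) {x. \<forall>j<k. x j \<in> B j} = (\<Prod>j<k. real (card ({..<n} \<inter> B j)) / n)"
proof -
  have "{x. \<forall>j<k. x j \<in> B j} = Pi {..<k} B" by (auto simp: Pi_def)
  moreover have "{..<n} \<noteq> {}" using assms by (simp add: lessThan_empty_iff)
  ultimately show ?thesis unfolding step_pmf_def
    by (simp add: measure_Pi_pmf_Pi measure_pmf_of_set)
qed

lemma measure_step_pmf_component:
  assumes "n \<ge> 1" "i < k"
  shows "measure_pmf.prob (step_pmf n k) {x. x i \<in> C} = real (card ({..<n} \<inter> C)) / n"
proof -
  have "measure_pmf.prob (step_pmf n k) {x. x i \<in> C} = measure_pmf.prob (map_pmf (\<lambda>x. x i) (step_pmf n k)) C"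
    by (simp add: vimage_def)
  also have "map_pmf (\<lambda>x. x i) (step_pmf n k) = pmf_of_set {..<n}"
    using assms(2) by (simp add: step_pmf_def Pi_pmf_component)
  finally show ?thesis using assms(1) by (simp add: measure_pmf_of_set lessThan_empty_iff)
qed

lemma finite_set_step_pmf: "n \<ge> 1 \<Longrightarrow> finite (set_pmf (step_pmf n k))"
  unfolding step_pmf_def by (subst set_Pi_pmf) (auto simp: set_pmf_of_set lessThan_empty_iff)

lemma integrable_step_pmf [simp]:
  "n \<ge> 1 \<Longrightarrow> integrable (measure_pmf (step_pmf n k)) (f :: _ \<Rightarrow> real)"
  by (rule integrable_measure_pmf_finite[OF finite_set_step_pmf])

definition no_progress :: "nat \<Rightarrow> (nat \<Rightarrow> nat set) \<Rightarrow> (nat \<Rightarrow> nat) set" where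
  "no_progress k A = {x. \<forall>j<k. x j \<notin> A j}"

definition sole_progress :: "nat \<Rightarrow> (nat \<Rightarrow> nat set) \<Rightarrow> nat \<Rightarrow> nat \<Rightarrow> (nat \<Rightarrow> nat) set" where
  "sole_progress k A i a = {x. x i = a \<and> (\<forall>j<k. j \<noteq> i \<longrightarrow> x j \<notin> A j)}"

definition multi_progress :: "nat \<Rightarrow> (nat \<Rightarrow> nat set) \<Rightarrow> (nat \<Rightarrow> nat) set" where
  "multi_progress k A = - (no_progress k A \<union> (\<Union>(i, a)\<in>Sigma {..<k} A. sole_progress k A i a))"

lemma indicator_progress_partition:
  assumes "\<forall>i<k. finite (A i)"
  shows "indicator (no_progress k A) x + (\<Sum>(i, a)\<in>Sigma {..<k} A. indicator (sole_progress k A i a) x)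
      + indicator (multi_progress k A) x = (1 :: real)"
proof -
  let ?S = "\<Union>(i, a)\<in>Sigma {..<k} A. sole_progress k A i a"
  have "disjoint_family_on (\<lambda>(i, a). sole_progress k A i a) (Sigma {..<k} A)"
    by (auto simp: disjoint_family_on_def sole_progress_def)
  then have "(\<Sum>(i, a)\<in>Sigma {..<k} A. indicator (sole_progress k A i a) x) = (indicator ?S x :: real)"
    using assms by (subst indicator_UN_disjoint) (auto simp: case_prod_unfold)
  moreover have "no_progress k A \<inter> ?S = {}"
    by (auto simp: no_progress_def sole_progress_def)
  ultimately show ?thesis
    by (auto simp: multi_progress_def indicator_def)
qed

lemma expectation_progress_split:
  fixes \<phi> :: "(nat \<Rightarrow> nat) \<Rightarrow> real"
  assumes "n \<ge> 1" "\<forall>i<k. finite (A i)"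
  shows "measure_pmf.expectation (step_pmf n k) \<phi>
    = measure_pmf.expectation (step_pmf n k) (\<lambda>x. \<phi> x * indicator (no_progress k A) x)
      + (\<Sum>(i, a)\<in>Sigma {..<k} A. measure_pmf.expectation (step_pmf n k) (\<lambda>x. \<phi> x * indicator (sole_progress k A i a) x))
      + measure_pmf.expectation (step_pmf n k) (\<lambda>x. \<phi> x * indicator (multi_progress k A) x)"
proof -
  have "\<phi> x = \<phi> x * indicator (no_progress k A) x
      + (\<Sum>(i, a)\<in>Sigma {..<k} A. \<phi> x * indicator (sole_progress k A i a) x)
      + \<phi> x * indicator (multi_progress k A) x" for x
  proof -
    have "\<phi> x = \<phi> x * (indicator (no_progress k A) x
        + (\<Sum>(i, a)\<in>Sigma {..<k} A. indicator (sole_progress k A i a) x) + indicator (multi_progress k A) x)"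
      by (simp only: indicator_progress_partition[OF assms(2)] mult_1_right)
    then show ?thesis
      by (simp add: distrib_left sum_distrib_left case_prod_unfold)
  qed
  then have "measure_pmf.expectation (step_pmf n k) \<phi> = measure_pmf.expectation (step_pmf n k)
      (\<lambda>x. \<phi> x * indicator (no_progress k A) x
        + (\<Sum>(i, a)\<in>Sigma {..<k} A. \<phi> x * indicator (sole_progress k A i a) x)
        + \<phi> x * indicator (multi_progress k A) x)"
    by (intro Bochner_Integration.integral_cong) auto
  then show ?thesis
    using assms(1) by (simp add: integral_add integral_sum case_prod_unfold)
qed

lemma card_lessThan_Int_Compl:
  assumes "n \<ge> 1" "A \<subseteq> {..<n}"
  shows "real (card ({..<n} \<inter> - A)) / real n = 1 - real (card A) / real n"
proof -
  have "{..<n} \<inter> - A = {..<n} - A" by auto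
  moreover have "card A \<le> n" using card_mono[OF finite_lessThan assms(2)] by simp
  ultimately show ?thesis
    using assms finite_subset[OF assms(2)] by (simp add: card_Diff_subset of_nat_diff diff_divide_distrib)
qed

lemma measure_no_progress:
  assumes "n \<ge> 1" "\<forall>j<k. A j \<subseteq> {..<n}"
  shows "measure_pmf.prob (step_pmf n k) (no_progress k A) = stay_prob n k A"
proof -
  have "no_progress k A = {x. \<forall>j<k. x j \<in> - A j}" by (auto simp: no_progress_def)
  then have "measure_pmf.prob (step_pmf n k) (no_progress k A) = (\<Prod>j<k. real (card ({..<n} \<inter> - A j)) / n)"
    by (simp only: measure_step_pmf[OF assms(1)])
  also have "\<dots> = stay_prob n k A"
    unfolding stay_prob_def by (intro prod.cong) (use assms in \<open>auto simp: card_lessThan_Int_Compl\<close>)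
  finally show ?thesis .
qed

lemma measure_sole_progress:
  assumes "n \<ge> 1" "\<forall>j<k. A j \<subseteq> {..<n}" "i < k" "a \<in> A i"
  shows "measure_pmf.prob (step_pmf n k) (sole_progress k A i a) = move_prob n k A i"
proof -
  have "sole_progress k A i a = {x. \<forall>j<k. x j \<in> (if j = i then {a} else - A j)}"
    using assms(3) by (auto simp: sole_progress_def)
  then have "measure_pmf.prob (step_pmf n k) (sole_progress k A i a)
      = (\<Prod>j<k. real (card ({..<n} \<inter> (if j = i then {a} else - A j))) / n)"
    using measure_step_pmf[OF assms(1)] by simp
  also have "\<dots> = real (card ({..<n} \<inter> {a})) / n
      * (\<Prod>j\<in>{..<k} - {i}. real (card ({..<n} \<inter> - A j)) / n)"
    using assms(3) by (subst prod.remove[of "{..<k}" i]) (auto intro!: prod.cong)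
  also have "{..<n} \<inter> {a} = {a}" using assms(2-4) by auto
  also have "real (card {a}) / n * (\<Prod>j\<in>{..<k} - {i}. real (card ({..<n} \<inter> - A j)) / n)
      = move_prob n k A i"
    unfolding move_prob_def using assms by (auto simp: card_lessThan_Int_Compl intro!: prod.cong)
  finally show ?thesis .
qed

lemma measure_multi_progress:
  assumes "n \<ge> 1" "\<forall>j<k. A j \<subseteq> {..<n}"
  shows "measure_pmf.prob (step_pmf n k) (multi_progress k A)
    = 1 - stay_prob n k A - (\<Sum>(i, a)\<in>Sigma {..<k} A. move_prob n k A i)"
proof -
  have "(\<Sum>(i, a)\<in>Sigma {..<k} A. measure_pmf.prob (step_pmf n k) (sole_progress k A i a))
      = (\<Sum>(i, a)\<in>Sigma {..<k} A. move_prob n k A i)"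
    by (intro sum.cong refl) (clarsimp simp: measure_sole_progress[OF assms])
  moreover have "\<forall>i<k. finite (A i)" using assms(2) finite_subset by blast
  ultimately show ?thesis
    using expectation_progress_split[of n k A "\<lambda>_. 1"] assms by (simp add: measure_no_progress)
qed

section \<open>Collection times\<close>

text \<open>If some coupon of \<open>A\<close> never shows up, the \<open>LEAST\<close> is unspecified; by
  \<open>AE_finds_all\<close> this happens only on a null set.\<close>

definition collection_time :: "nat set \<Rightarrow> nat \<Rightarrow> (nat \<Rightarrow> nat) stream \<Rightarrow> nat" where
  "collection_time A i \<omega> = (LEAST t. A \<subseteq> {(\<omega> !! j) i | j. j < t})"

lemma completion_time_eq_collection_time: "completion_time s i = collection_time {..<s} i"
  by (simp add: fun_eq_iff completion_time_def collection_time_def)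

lemma measurable_collection_time [measurable]:
  "collection_time A i \<in> measurable (stream_space (measure_pmf p)) (count_space UNIV)"
proof -
  have "(\<lambda>x. x i = a) \<in> measurable (measure_pmf p) (count_space UNIV)" for a
    by simp
  from measurable_compose[OF measurable_snth this]
  have [measurable]: "Measurable.pred (stream_space (measure_pmf p)) (\<lambda>\<omega>. (\<omega> !! j) i = a)" for j a
    by (simp add: o_def)
  have eq: "collection_time A i = (\<lambda>\<omega>. LEAST t. \<forall>a\<in>A. \<exists>j\<in>{..<t}. (\<omega> !! j) i = a)"
    unfolding collection_time_def by (intro ext arg_cong[where f = Least]) auto
  show ?thesis unfolding eq by measurable
qed

lemma collection_time_empty [simp]: "collection_time {} i \<omega> = 0"
  by (simp add: collection_time_def)

lemma collected_by_collection_time: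
  assumes "finite A" "\<forall>a\<in>A. \<exists>j. (\<omega> !! j) i = a"
  shows "A \<subseteq> {(\<omega> !! j) i | j. j < collection_time A i \<omega>}"
proof -
  obtain f where f: "\<forall>a\<in>A. (\<omega> !! f a) i = a" using bchoice[OF assms(2)] by blast
  obtain t where "f ` A \<subseteq> {..<t}" using finite_nat_bounded[of "f ` A"] assms(1) by blast
  then have "A \<subseteq> {(\<omega> !! j) i | j. j < t}" using f by force
  then show ?thesis unfolding collection_time_def by (rule LeastI)
qed

lemma collection_time_eq_0_iff:
  assumes "finite A" "\<forall>a\<in>A. \<exists>j. (\<omega> !! j) i = a"
  shows "collection_time A i \<omega> = 0 \<longleftrightarrow> A = {}"
  using collected_by_collection_time[OF assms] by (auto simp: collection_time_def)

lemma collection_time_Cons: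
  assumes "finite A" "A \<noteq> {}" "\<forall>a\<in>A. \<exists>j. (\<omega> !! j) i = a"
  shows "collection_time A i (x ## \<omega>) = Suc (collection_time (A - {x i}) i \<omega>)"
proof -
  have found: "{((x ## \<omega>) !! j) i | j. j < Suc t} = insert (x i) {(\<omega> !! j) i | j. j < t}" for t
  proof -
    have "{((x ## \<omega>) !! j) i | j. j < Suc t} = (\<lambda>j. ((x ## \<omega>) !! j) i) ` {..<Suc t}"
      by auto
    also have "\<dots> = insert (x i) ((\<lambda>j. (\<omega> !! j) i) ` {..<t})"
      by (simp add: lessThan_Suc_eq_insert_0 image_image)
    finally show ?thesis by auto
  qed
  then have shift: "A \<subseteq> {((x ## \<omega>) !! j) i | j. j < Suc t} \<longleftrightarrow> A - {x i} \<subseteq> {(\<omega> !! j) i | j. j < t}" for t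
    by blast
  have "collection_time A i (x ## \<omega>) = Suc (LEAST t. A \<subseteq> {((x ## \<omega>) !! j) i | j. j < Suc t})"
    unfolding collection_time_def
  proof (rule Least_Suc)
    show "A \<subseteq> {((x ## \<omega>) !! j) i | j. j < Suc (collection_time (A - {x i}) i \<omega>)}"
      using shift collected_by_collection_time[of "A - {x i}" \<omega> i] assms by blast
  qed (use assms(2) in simp)
  then show ?thesis unfolding shift collection_time_def .
qed

definition finds_all :: "nat \<Rightarrow> (nat \<Rightarrow> nat set) \<Rightarrow> (nat \<Rightarrow> nat) stream \<Rightarrow> bool" where
  "finds_all k A \<omega> \<longleftrightarrow> (\<forall>i<k. \<forall>a\<in>A i. \<exists>j. (\<omega> !! j) i = a)"

definition slowest :: "nat \<Rightarrow> (nat \<Rightarrow> nat set) \<Rightarrow> (nat \<Rightarrow> nat) stream \<Rightarrow> bool" where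
  "slowest k A \<omega> \<longleftrightarrow> (\<forall>i<k. collection_time (A i) i \<omega> \<le> collection_time (A 0) 0 \<omega>)"

lemma slowest_Cons:
  assumes "0 < k" "\<forall>i<k. finite (A i)" "finds_all k A \<omega>" "A 0 \<noteq> {}"
  shows "slowest k A (x ## \<omega>) \<longleftrightarrow> slowest k (\<lambda>i. A i - {x i}) \<omega>"
proof -
  have "collection_time (A i) i (x ## \<omega>) \<le> collection_time (A 0) 0 (x ## \<omega>)
      \<longleftrightarrow> collection_time (A i - {x i}) i \<omega> \<le> collection_time (A 0 - {x 0}) 0 \<omega>" if "i < k" for i
    using assms that by (cases "A i = {}") (simp_all add: collection_time_Cons finds_all_def)
  then show ?thesis by (simp add: slowest_def)
qed

lemma slowest_iff_of_empty:
  assumes "\<forall>i<k. finite (A i)" "finds_all k A \<omega>" "A 0 = {}"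
  shows "slowest k A \<omega> \<longleftrightarrow> (\<forall>i<k. A i = {})"
  using assms by (simp add: slowest_def collection_time_eq_0_iff finds_all_def)

lemma (in prob_space) AE_stream_eventually_notin:
  assumes [measurable]: "B \<in> sets M" and "prob B < 1"
  shows "AE \<omega> in stream_space M. \<exists>j. \<omega> !! j \<notin> B"
proof -
  interpret S: prob_space "stream_space M" by (rule prob_space_stream_space)
  define q where "q = \<P>(\<omega> in stream_space M. \<forall>j. \<omega> !! j \<in> B)"
  have "ennreal q = (\<integral>\<^sup>+t. \<P>(\<omega> in stream_space M. \<forall>j. (t ## \<omega>) !! j \<in> B) \<partial>M)"
    unfolding q_def by (rule prob_stream_space) measurable
  also have "\<dots> = (\<integral>\<^sup>+t. ennreal q * indicator B t \<partial>M)"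
  proof (intro nn_integral_cong)
    fix t
    have "(\<forall>j. (t ## \<omega>) !! j \<in> B) \<longleftrightarrow> t \<in> B \<and> (\<forall>j. \<omega> !! j \<in> B)" for \<omega>
      by (metis snth.simps(1,2) stream.sel(1,2) not0_implies_Suc)
    then show "ennreal \<P>(\<omega> in stream_space M. \<forall>j. (t ## \<omega>) !! j \<in> B) = ennreal q * indicator B t"
      by (simp add: q_def split: split_indicator)
  qed
  also have "\<dots> = ennreal (q * prob B)"
    by (simp add: nn_integral_cmult_indicator emeasure_eq_measure q_def ennreal_mult)
  finally have "q * (1 - prob B) = 0"
    by (simp add: q_def algebra_simps ennreal_inj)
  then have "q = 0" using assms(2) by simp
  moreover have "{\<omega> \<in> space (stream_space M). \<forall>j. \<omega> !! j \<in> B} \<in> sets (stream_space M)"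
    by measurable
  ultimately have "AE \<omega> in stream_space M. \<omega> \<notin> {\<omega> \<in> space (stream_space M). \<forall>j. \<omega> !! j \<in> B}"
    using S.prob_eq_0 unfolding q_def by blast
  then show ?thesis by (rule AE_mp) (rule AE_I2, auto)
qed

lemma prob_space_coupon_space: "prob_space (coupon_space n k)"
  unfolding coupon_space_def by (rule prob_space.prob_space_stream_space) (rule prob_space_measure_pmf)

lemma AE_finds_all:
  assumes "n \<ge> 1" "\<forall>i<k. A i \<subseteq> {..<n}"
  shows "AE \<omega> in coupon_space n k. finds_all k A \<omega>"
proof -
  have "AE \<omega> in coupon_space n k. \<exists>j. (\<omega> !! j) i = a" if "i < k" "a < n" for i a
  proof -
    have "{..<n} \<inter> {x. x \<noteq> a} = {..<n} - {a}" by auto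
    then have "card ({..<n} \<inter> {x. x \<noteq> a}) = n - 1"
      using that by (simp add: card_Diff_singleton)
    then have "measure_pmf.prob (step_pmf n k) {x. x i \<in> {x. x \<noteq> a}} < 1"
      using measure_step_pmf_component[OF assms(1) that(1), of "{x. x \<noteq> a}"] assms(1) by simp
    then have "AE \<omega> in coupon_space n k. \<exists>j. \<omega> !! j \<notin> {x. x i \<noteq> a}"
      unfolding coupon_space_def
      by (intro prob_space.AE_stream_eventually_notin) (simp_all add: prob_space_measure_pmf)
    then show ?thesis by (rule eventually_mono) auto
  qed
  then have "AE \<omega> in coupon_space n k. \<forall>i\<in>{..<k}. \<forall>a\<in>{..<n}. \<exists>j. (\<omega> !! j) i = a"
    by (simp add: AE_ball_countable)
  then show ?thesis
  proof (rule eventually_mono)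
    fix \<omega> assume "\<forall>i\<in>{..<k}. \<forall>a\<in>{..<n}. \<exists>j. (\<omega> !! j) i = a"
    then show "finds_all k A \<omega>" using assms(2) unfolding finds_all_def by blast
  qed
qed

section \<open>The probability of being slowest\<close>

definition prob_slowest :: "nat \<Rightarrow> nat \<Rightarrow> (nat \<Rightarrow> nat set) \<Rightarrow> real" where
  "prob_slowest n k A = \<P>(\<omega> in coupon_space n k. slowest k A \<omega>)"

lemma P1_eq_prob_slowest: "P1 n k s = prob_slowest n k (\<lambda>i. {..<s i})"
  by (simp add: P1_def prob_slowest_def slowest_def completion_time_eq_collection_time)

lemma measurable_slowest [measurable]: "Measurable.pred (coupon_space n k) (slowest k A)"
proof -
  have [measurable]: "Measurable.pred (coupon_space n k) (\<lambda>\<omega>. collection_time (A i) i \<omega> \<le> collection_time (A 0) 0 \<omega>)"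
    for i
    by (rule measurable_compose_countable[where f = "\<lambda>t \<omega>. collection_time (A i) i \<omega> \<le> t"])
       (simp_all add: coupon_space_def)
  show ?thesis unfolding slowest_def by measurable
qed

lemma prob_slowest_nonneg: "0 \<le> prob_slowest n k A"
  by (simp add: prob_slowest_def)

lemma prob_slowest_le_1: "prob_slowest n k A \<le> 1"
  using prob_space.prob_le_1[OF prob_space_coupon_space] by (simp add: prob_slowest_def)

lemma prob_slowest_cong: "\<forall>i<k. A i = B i \<Longrightarrow> prob_slowest n k A = prob_slowest n k B"
  by (simp add: prob_slowest_def slowest_def)

lemma prob_slowest_of_empty:
  assumes "n \<ge> 1" "\<forall>i<k. A i \<subseteq> {..<n}" "A 0 = {}"
  shows "prob_slowest n k A = (if \<forall>i<k. A i = {} then 1 else 0)"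
proof -
  interpret prob_space "coupon_space n k" by (rule prob_space_coupon_space)
  have fin: "\<forall>i<k. finite (A i)" using assms(2) finite_subset by blast
  have "AE \<omega> in coupon_space n k. slowest k A \<omega> \<longleftrightarrow> (\<forall>i<k. A i = {})"
    using AE_finds_all[OF assms(1,2)]
    by (rule eventually_mono) (simp add: slowest_iff_of_empty[OF fin _ assms(3)])
  then have "prob_slowest n k A = \<P>(\<omega> in coupon_space n k. \<forall>i<k. A i = {})"
    unfolding prob_slowest_def by (intro prob_eq_AE) auto
  then show ?thesis by (cases "\<forall>i<k. A i = {}") (simp_all add: prob_space)
qed

lemma prob_slowest_first_step:
  assumes "n \<ge> 1" "0 < k" "\<forall>i<k. A i \<subseteq> {..<n}" "A 0 \<noteq> {}"
  shows "prob_slowest n k A = measure_pmf.expectation (step_pmf n k) (\<lambda>x. prob_slowest n k (\<lambda>i. A i - {x i}))"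
proof -
  interpret prob_space "coupon_space n k" by (rule prob_space_coupon_space)
  have fin: "\<forall>i<k. finite (A i)" using assms(3) finite_subset by blast
  have "ennreal (prob_slowest n k A)
      = (\<integral>\<^sup>+x. \<P>(\<omega> in coupon_space n k. slowest k A (x ## \<omega>)) \<partial>step_pmf n k)"
    unfolding prob_slowest_def coupon_space_def
    by (rule prob_space.prob_stream_space[OF prob_space_measure_pmf])
       (use measurable_slowest[where n = n and k = k and A = A] in \<open>simp add: coupon_space_def pred_def\<close>)
  also have "\<dots> = (\<integral>\<^sup>+x. prob_slowest n k (\<lambda>i. A i - {x i}) \<partial>step_pmf n k)"
  proof (intro nn_integral_cong)
    fix x
    have [measurable]: "(\<lambda>\<omega>. x ## \<omega>) \<in> measurable (coupon_space n k) (coupon_space n k)"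
      unfolding coupon_space_def by measurable
    have "AE \<omega> in coupon_space n k. slowest k A (x ## \<omega>) \<longleftrightarrow> slowest k (\<lambda>i. A i - {x i}) \<omega>"
      using AE_finds_all[OF assms(1,3)]
      by (rule eventually_mono) (simp add: slowest_Cons[OF assms(2) fin _ assms(4)])
    then show "ennreal \<P>(\<omega> in coupon_space n k. slowest k A (x ## \<omega>))
        = ennreal (prob_slowest n k (\<lambda>i. A i - {x i}))"
      unfolding prob_slowest_def by (intro arg_cong[where f = ennreal] prob_eq_AE) auto
  qed
  also have "\<dots> = measure_pmf.expectation (step_pmf n k) (\<lambda>x. prob_slowest n k (\<lambda>i. A i - {x i}))"
    using assms(1) by (intro nn_integral_eq_integral AE_I2) (simp_all add: prob_slowest_nonneg)
  finally have "ennreal (prob_slowest n k A)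
      = ennreal (measure_pmf.expectation (step_pmf n k) (\<lambda>x. prob_slowest n k (\<lambda>i. A i - {x i})))" .
  moreover have "0 \<le> measure_pmf.expectation (step_pmf n k) (\<lambda>x. prob_slowest n k (\<lambda>i. A i - {x i}))"
    by (rule integral_nonneg_AE) (rule AE_I2, rule prob_slowest_nonneg)
  ultimately show ?thesis
    using prob_slowest_nonneg[of n k A] by (simp only: ennreal_inj)
qed

lemma expectation_prob_slowest_no_progress:
  assumes "n \<ge> 1" "\<forall>i<k. A i \<subseteq> {..<n}"
  shows "measure_pmf.expectation (step_pmf n k)
      (\<lambda>x. prob_slowest n k (\<lambda>i. A i - {x i}) * indicator (no_progress k A) x)
    = stay_prob n k A * prob_slowest n k A"
proof -
  have "measure_pmf.expectation (step_pmf n k)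
      (\<lambda>x. prob_slowest n k (\<lambda>i. A i - {x i}) * indicator (no_progress k A) x)
    = measure_pmf.expectation (step_pmf n k) (\<lambda>x. prob_slowest n k A * indicator (no_progress k A) x)"
    by (intro Bochner_Integration.integral_cong refl)
       (auto simp: no_progress_def indicator_def intro!: prob_slowest_cong)
  then show ?thesis
    using assms by (simp add: measure_no_progress)
qed

lemma expectation_prob_slowest_sole_progress:
  assumes "n \<ge> 1" "\<forall>i<k. A i \<subseteq> {..<n}" "i < k" "a \<in> A i"
  shows "measure_pmf.expectation (step_pmf n k)
      (\<lambda>x. prob_slowest n k (\<lambda>j. A j - {x j}) * indicator (sole_progress k A i a) x)
    = move_prob n k A i * prob_slowest n k (A(i := A i - {a}))"
proof -
  have "measure_pmf.expectation (step_pmf n k)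
      (\<lambda>x. prob_slowest n k (\<lambda>j. A j - {x j}) * indicator (sole_progress k A i a) x)
    = measure_pmf.expectation (step_pmf n k)
      (\<lambda>x. prob_slowest n k (A(i := A i - {a})) * indicator (sole_progress k A i a) x)"
    using assms(3) by (intro Bochner_Integration.integral_cong refl)
      (auto simp: sole_progress_def indicator_def split: if_splits intro!: prob_slowest_cong)
  then show ?thesis
    using assms by (simp add: measure_sole_progress)
qed

lemma prob_slowest_one_step:
  assumes "n \<ge> 1" "0 < k" "\<forall>i<k. A i \<subseteq> {..<n}" "A 0 \<noteq> {}"
  obtains r where
    "prob_slowest n k A = stay_prob n k A * prob_slowest n k A
      + (\<Sum>(i, a)\<in>Sigma {..<k} A. move_prob n k A i * prob_slowest n k (A(i := A i - {a}))) + r"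
    and "0 \<le> r" and "r \<le> 1 - stay_prob n k A - (\<Sum>(i, a)\<in>Sigma {..<k} A. move_prob n k A i)"
proof -
  let ?E = "measure_pmf.expectation (step_pmf n k)"
  define h where "h = (\<lambda>x. prob_slowest n k (\<lambda>i. A i - {x i}))"
  define r where "r = ?E (\<lambda>x. h x * indicator (multi_progress k A) x)"
  have fin: "\<forall>i<k. finite (A i)" using assms(3) finite_subset by blast
  have "(\<Sum>(i, a)\<in>Sigma {..<k} A. ?E (\<lambda>x. h x * indicator (sole_progress k A i a) x))
      = (\<Sum>(i, a)\<in>Sigma {..<k} A. move_prob n k A i * prob_slowest n k (A(i := A i - {a})))"
    unfolding h_def
    by (intro sum.cong refl) (clarsimp simp: expectation_prob_slowest_sole_progress[OF assms(1,3)])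
  then have "?E h = stay_prob n k A * prob_slowest n k A
      + (\<Sum>(i, a)\<in>Sigma {..<k} A. move_prob n k A i * prob_slowest n k (A(i := A i - {a}))) + r"
    using expectation_progress_split[OF assms(1) fin, of h]
      expectation_prob_slowest_no_progress[OF assms(1,3)]
    by (simp add: r_def h_def)
  moreover have "prob_slowest n k A = ?E h"
    unfolding h_def by (rule prob_slowest_first_step[OF assms])
  moreover have "0 \<le> r"
    unfolding r_def h_def by (intro integral_nonneg_AE AE_I2) (simp add: prob_slowest_nonneg)
  moreover have "r \<le> ?E (indicator (multi_progress k A))"
    unfolding r_def h_def using assms(1)
    by (intro integral_mono) (simp_all add: prob_slowest_le_1 indicator_def)
  ultimately show thesis
    using measure_multi_progress[OF assms(1,3)] by (intro that[of r]) simp_all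
qed

lemma prob_slowest_share_step:
  assumes "n \<ge> 1" "0 < k" "\<forall>i<k. A i \<subseteq> {..<n}" "A 0 \<noteq> {}" "0 \<le> \<epsilon>"
    and removed: "\<And>i a. i < k \<Longrightarrow> a \<in> A i \<Longrightarrow>
      \<bar>prob_slowest n k (A(i := A i - {a})) - share k (A(i := A i - {a}))\<bar> \<le> \<epsilon>"
  shows "\<bar>prob_slowest n k A - share k A\<bar> \<le> \<epsilon> + 2 * real (\<Sum>i<k. card (A i)) ^ 2 / n"
proof -
  define J where "J = Sigma {..<k} A"
  define U where "U = (\<Sum>i<k. card (A i))"
  have fin: "\<forall>i<k. finite (A i)" using assms(3) finite_subset by blast
  have card_J: "card J = U" using fin by (simp add: J_def U_def)
  have card_le: "\<forall>j<k. card (A j) \<le> n"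
    using assms(3) card_mono[OF finite_lessThan] by fastforce
  obtain r where
    F_eq: "prob_slowest n k A = stay_prob n k A * prob_slowest n k A
      + (\<Sum>(i, a)\<in>J. move_prob n k A i * prob_slowest n k (A(i := A i - {a}))) + r"
    and r: "0 \<le> r" "r \<le> 1 - stay_prob n k A - (\<Sum>(i, a)\<in>J. move_prob n k A i)"
    unfolding J_def by (rule prob_slowest_one_step[OF assms(1-4)])
  show ?thesis
    unfolding U_def[symmetric]
  proof (rule averaging_equation_deviation[where J = J and p = "stay_prob n k A" and r = r,
        where w = "\<lambda>p. move_prob n k A (fst p)"
          and f = "\<lambda>p. prob_slowest n k (A(fst p := A (fst p) - {snd p}))"
          and g = "\<lambda>p. share k (A(fst p := A (fst p) - {snd p}))", unfolded card_J])
    show "finite J" using fin by (auto simp: J_def intro!: finite_SigmaI)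
    show "prob_slowest n k A = stay_prob n k A * prob_slowest n k A
        + (\<Sum>p\<in>J. move_prob n k A (fst p) * prob_slowest n k (A(fst p := A (fst p) - {snd p}))) + r"
      using F_eq by (simp add: case_prod_unfold)
    show "r \<le> 1 - stay_prob n k A - (\<Sum>p\<in>J. move_prob n k A (fst p))"
      using r by (simp add: case_prod_unfold)
    show "1 - real U / n \<le> stay_prob n k A"
      using stay_prob_lower[OF card_le] by (simp add: U_def)
    show "stay_prob n k A \<le> 1 - 1 / n"
      using stay_prob_upper[OF card_le assms(2,4)] fin assms(2) by simp
    show "(\<Sum>p\<in>J. share k (A(fst p := A (fst p) - {snd p}))) = real U * share k A"
      using share_harmonic[OF assms(2) fin assms(4)] by (simp add: J_def U_def case_prod_unfold)
  qed (use r move_prob_bounds[OF card_le assms(1)] removed share_bounds[OF assms(2)] fin assms(1,5)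
       in \<open>auto simp: U_def J_def\<close>)
qed

lemma prob_slowest_share_deviation:
  assumes "n \<ge> 1" "0 < k" "\<forall>i<k. A i \<subseteq> {..<n}"
  shows "\<bar>prob_slowest n k A - share k A\<bar> \<le> 2 * real (\<Sum>i<k. card (A i)) ^ 3 / n"
  using assms(3)
proof (induction A rule: measure_induct_rule[where f = "\<lambda>A. \<Sum>i<k. card (A i)"])
  case (less A)
  have fin: "\<forall>i<k. finite (A i)" using less.prems finite_subset by blast
  show ?case
  proof (cases "A 0 = {}")
    case True
    then have "prob_slowest n k A = share k A"
      using prob_slowest_of_empty[OF assms(1) less.prems True] fin by (simp add: share_def)
    then show ?thesis by (simp del: of_nat_sum)
  next
    case False
    have "0 < card (A 0)" using False fin assms(2) by (simp add: card_gt_0_iff)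
    moreover have "card (A 0) \<le> (\<Sum>i<k. card (A i))"
      using fin assms(2) by (intro member_le_sum) auto
    ultimately obtain m where m: "(\<Sum>i<k. card (A i)) = Suc m"
      by (cases "\<Sum>i<k. card (A i)") auto
    have "\<bar>prob_slowest n k (A(i := A i - {a})) - share k (A(i := A i - {a}))\<bar> \<le> 2 * real m ^ 3 / n"
      if "i < k" "a \<in> A i" for i a
    proof -
      have sum_m: "(\<Sum>j<k. card ((A(i := A i - {a})) j)) = m"
        using sum_card_remove[of i k a A] that fin m by simp
      moreover have "\<forall>j<k. (A(i := A i - {a})) j \<subseteq> {..<n}"
        using less.prems by auto
      ultimately have "\<bar>prob_slowest n k (A(i := A i - {a})) - share k (A(i := A i - {a}))\<bar>
          \<le> 2 * real (\<Sum>j<k. card ((A(i := A i - {a})) j)) ^ 3 / n"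
        using m by (intro less.IH) simp_all
      then show ?thesis by (simp only: sum_m)
    qed
    then have "\<bar>prob_slowest n k A - share k A\<bar> \<le> 2 * real m ^ 3 / n + 2 * real (Suc m) ^ 2 / n"
      using prob_slowest_share_step[OF assms(1,2) less.prems False] m by simp
    also have "\<dots> \<le> 2 * real (Suc m) ^ 3 / n"
    proof -
      have "real m ^ 3 + real (Suc m) ^ 2 \<le> real (Suc m) ^ 3"
        by (simp add: power2_eq_square power3_eq_cube algebra_simps)
      then show ?thesis by (simp add: divide_right_mono flip: add_divide_distrib)
    qed
    finally show ?thesis using m by simp
  qed
qed

theorem mainTheorem4:
  fixes k :: nat and s :: "nat \<Rightarrow> nat"
  assumes "k \<ge> 1" and "(\<Sum>i<k. s i) \<ge> 1"
  shows "(\<lambda>n. P1 n k s) \<longlonglongrightarrow> real (s 0) / real (\<Sum>i<k. s i)"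
proof -
  define S where "S = (\<Sum>i<k. s i)"
  have "\<not> (\<forall>i<k. s i = 0)"
    using assms(2) by (metis lessThan_iff not_one_le_zero sum.neutral)
  then have share: "share k (\<lambda>i. {..<s i}) = real (s 0) / S"
    by (auto simp: share_def S_def simp del: of_nat_sum)
  have "\<bar>P1 n k s - real (s 0) / S\<bar> \<le> 2 * real S ^ 3 / n" if "n \<ge> S" for n
  proof -
    have "\<forall>i<k. {..<s i} \<subseteq> {..<n}"
      using member_le_sum[of _ "{..<k}" s] that by (fastforce simp: S_def)
    then show ?thesis
      using prob_slowest_share_deviation[of n k "\<lambda>i. {..<s i}"] assms that
      by (simp add: P1_eq_prob_slowest share S_def del: of_nat_sum)
  qed
  then have "(\<lambda>n. P1 n k s - real (s 0) / S) \<longlonglongrightarrow> 0"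
    by (intro Lim_null_comparison[OF _ lim_const_over_n[of "2 * real S ^ 3"]])
       (auto simp: eventually_sequentially)
  then show ?thesis
    unfolding S_def by (rule LIM_zero_cancel)
qed

end
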